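(* Let $\Gamma=(V,m,\tau)$ be a weak $W$-graph and let $A\subseteq\Delta$. Then the representation $\mathbb{C}V$, restricted to $W(A)$, contains a copy of the trivial representation of $W(A)$ if and only if $A\cap\tau(v)=\emptyset$ for some $v\in V$.
   Context: $W$ is a Weyl group with a fixed set $\Delta$ of simple roots; for a root $\alpha$, $s_\alpha$ is the reflection in the hyperplane orthogonal to $\alpha$. A weak $W$-graph is a triple $\Gamma=(V,m,\tau)$ where $V$ is a finite set, $m:V\times V\to\mathbb{C}$ is a map, and $\tau$ is a map from $V$ to the power set of $\Delta$, such that the linear maps $s_\alpha:\mathbb{C}V\to\mathbb{C}V$ ($\alpha\in\Delta$) given on basis vectors by $s_\alpha(v)=-v$ if $\alpha\in\tau(v)$ and $s_\alpha(v)=v-\sum_{u\in V,\ \alpha\in\tau(u)} m(u,v)u$ if $\alpha\notin\tau(v)$ define a representation of $W$ on $\mathbb{C}V$. For $A\subseteq\Delta$, $W(A)$ is the subgroup of $W$ generated by $\{s_\alpha:\alpha\in A\}$. *)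

theory Defs
  imports "HOL-Analysis.Analysis"
begin

definition refl :: "'a::euclidean_space \<Rightarrow> 'a \<Rightarrow> 'a" where
  "refl \<alpha> x = x - (2 * (x \<bullet> \<alpha>) / (\<alpha> \<bullet> \<alpha>)) *\<^sub>R \<alpha>"

text \<open>Crystallographic, reduced root system (in the subspace it spans).\<close>
definition root_system :: "'a::euclidean_space set \<Rightarrow> bool" where
  "root_system \<Phi> \<longleftrightarrow> finite \<Phi> \<and> 0 \<notin> \<Phi>
     \<and> (\<forall>\<alpha>\<in>\<Phi>. refl \<alpha> ` \<Phi> = \<Phi>)
     \<and> (\<forall>\<alpha>\<in>\<Phi>. \<forall>\<beta>\<in>\<Phi>. 2 * (\<beta> \<bullet> \<alpha>) / (\<alpha> \<bullet> \<alpha>) \<in> \<int>)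
     \<and> (\<forall>\<alpha>\<in>\<Phi>. \<forall>c::real. c *\<^sub>R \<alpha> \<in> \<Phi> \<longrightarrow> c = 1 \<or> c = -1)"

definition simple_system :: "'a::euclidean_space set \<Rightarrow> 'a set \<Rightarrow> bool" where
  "simple_system \<Phi> \<Delta> \<longleftrightarrow> \<Delta> \<subseteq> \<Phi> \<and> independent \<Delta>
     \<and> (\<forall>\<beta>\<in>\<Phi>. \<exists>c::'a \<Rightarrow> real. \<beta> = (\<Sum>\<delta>\<in>\<Delta>. c \<delta> *\<^sub>R \<delta>)
            \<and> ((\<forall>\<delta>\<in>\<Delta>. c \<delta> \<ge> 0) \<or> (\<forall>\<delta>\<in>\<Delta>. c \<delta> \<le> 0)))"

text \<open>Group generated by the reflections in a set of vectors (reflections are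
  involutions, so the generated monoid is the generated group).\<close>
inductive_set refl_group :: "'a::euclidean_space set \<Rightarrow> ('a \<Rightarrow> 'a) set"
  for S :: "'a set" where
  id_in: "id \<in> refl_group S"
| step: "\<alpha> \<in> S \<Longrightarrow> w \<in> refl_group S \<Longrightarrow> refl \<alpha> \<circ> w \<in> refl_group S"

abbreviation weyl_group :: "'a::euclidean_space set \<Rightarrow> ('a \<Rightarrow> 'a) set" where
  "weyl_group \<Phi> \<equiv> refl_group \<Phi>"

abbreviation parabolic :: "'a::euclidean_space set \<Rightarrow> ('a \<Rightarrow> 'a) set" where
  "parabolic A \<equiv> refl_group A"

text \<open>The space CV: complex functions supported on V (basis vector v = indicator of v).\<close>
definition CV :: "'v set \<Rightarrow> ('v \<Rightarrow> complex) set" where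
  "CV V = {x. \<forall>u. u \<notin> V \<longrightarrow> x u = 0}"

text \<open>Coefficient of basis vector u in s_alpha(v).\<close>
definition wg_coeff :: "('v \<Rightarrow> 'v \<Rightarrow> complex) \<Rightarrow> ('v \<Rightarrow> 'a set) \<Rightarrow> 'a \<Rightarrow> 'v \<Rightarrow> 'v \<Rightarrow> complex" where
  "wg_coeff m \<tau> \<alpha> u v =
     (if \<alpha> \<in> \<tau> v then (if u = v then -1 else 0)
      else (if u = v then 1 else 0) - (if \<alpha> \<in> \<tau> u then m u v else 0))"

definition wg_op :: "'v set \<Rightarrow> ('v \<Rightarrow> 'v \<Rightarrow> complex) \<Rightarrow> ('v \<Rightarrow> 'a set) \<Rightarrow> 'a
                      \<Rightarrow> ('v \<Rightarrow> complex) \<Rightarrow> ('v \<Rightarrow> complex)" where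
  "wg_op V m \<tau> \<alpha> x = (\<lambda>u. if u \<in> V then (\<Sum>v\<in>V. wg_coeff m \<tau> \<alpha> u v * x v) else 0)"

definition W_graph_rep :: "'a::euclidean_space set \<Rightarrow> 'a set \<Rightarrow> 'v set \<Rightarrow> ('v \<Rightarrow> 'v \<Rightarrow> complex)
     \<Rightarrow> ('v \<Rightarrow> 'a set) \<Rightarrow> (('a \<Rightarrow> 'a) \<Rightarrow> ('v \<Rightarrow> complex) \<Rightarrow> ('v \<Rightarrow> complex)) \<Rightarrow> bool" where
  "W_graph_rep \<Phi> \<Delta> V m \<tau> \<rho> \<longleftrightarrow>
     (\<forall>w\<in>weyl_group \<Phi>. \<forall>x\<in>CV V. \<rho> w x \<in> CV V)
   \<and> (\<forall>w\<in>weyl_group \<Phi>. \<forall>x\<in>CV V. \<forall>y\<in>CV V. \<rho> w (\<lambda>u. x u + y u) = (\<lambda>u. \<rho> w x u + \<rho> w y u))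
   \<and> (\<forall>w\<in>weyl_group \<Phi>. \<forall>x\<in>CV V. \<forall>c. \<rho> w (\<lambda>u. c * x u) = (\<lambda>u. c * \<rho> w x u))
   \<and> (\<forall>x\<in>CV V. \<rho> id x = x)
   \<and> (\<forall>w1\<in>weyl_group \<Phi>. \<forall>w2\<in>weyl_group \<Phi>. \<forall>x\<in>CV V. \<rho> (w1 \<circ> w2) x = \<rho> w1 (\<rho> w2 x))
   \<and> (\<forall>\<alpha>\<in>\<Delta>. \<forall>x\<in>CV V. \<rho> (refl \<alpha>) x = wg_op V m \<tau> \<alpha> x)"

definition weak_W_graph :: "'a::euclidean_space set \<Rightarrow> 'a set \<Rightarrow> 'v set \<Rightarrow> ('v \<Rightarrow> 'v \<Rightarrow> complex)
     \<Rightarrow> ('v \<Rightarrow> 'a set) \<Rightarrow> bool" where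
  "weak_W_graph \<Phi> \<Delta> V m \<tau> \<longleftrightarrow> finite V \<and> (\<forall>v\<in>V. \<tau> v \<subseteq> \<Delta>)
     \<and> (\<exists>\<rho>. W_graph_rep \<Phi> \<Delta> V m \<tau> \<rho>)"

end

theory Submission
  imports Defs
begin

text \<open>Let \<open>P\<close> be the sum of the operators \<open>w\<close> over the finite group \<open>W(A)\<close>. Its image is
  \<open>W(A)\<close>-invariant, and on an invariant vector \<open>x\<close> it is multiplication by \<open>|W(A)|\<close>. If every
  \<open>v \<in> V\<close> has some \<open>\<alpha> \<in> A \<inter> \<tau>(v)\<close>, then \<open>s\<^sub>\<alpha> v = -v\<close> and reindexing the sum by
  \<open>w \<mapsto> w s\<^sub>\<alpha>\<close> gives \<open>P v = -P v = 0\<close>; so \<open>P = 0\<close> and no invariant vector is nonzero.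
  Conversely, if \<open>A \<inter> \<tau>(v) = {}\<close>, each \<open>s\<^sub>\<alpha>\<close> with \<open>\<alpha> \<in> A\<close> leaves the \<open>v\<close>-coordinate
  unchanged, so \<open>P v\<close> is invariant with \<open>v\<close>-coordinate \<open>|W(A)| \<noteq> 0\<close>.\<close>

lemma linear_refl: "linear (refl \<alpha>)"
  unfolding refl_def
  by (intro linearI) (auto simp: inner_add_left algebra_simps add_divide_distrib scaleR_add_left)

lemma refl_orthogonal: "x \<bullet> \<alpha> = 0 \<Longrightarrow> refl \<alpha> x = x"
  unfolding refl_def by simp

lemma refl_refl: "\<alpha> \<noteq> 0 \<Longrightarrow> refl \<alpha> (refl \<alpha> x) = x"
  unfolding refl_def by (simp add: inner_diff_left algebra_simps)

lemma refl_mem_refl_group: "\<alpha> \<in> S \<Longrightarrow> refl \<alpha> \<in> refl_group S"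
  using refl_group.step[OF _ refl_group.id_in] by fastforce

lemma refl_group_mono: "w \<in> refl_group S \<Longrightarrow> S \<subseteq> T \<Longrightarrow> w \<in> refl_group T"
  by (induction rule: refl_group.induct) (auto intro: refl_group.intros)

lemma refl_group_comp_closed: "g \<in> refl_group S \<Longrightarrow> w \<in> refl_group S \<Longrightarrow> g \<circ> w \<in> refl_group S"
  by (induction rule: refl_group.induct) (auto intro: refl_group.intros simp: comp_assoc)

lemma linear_refl_group: "w \<in> refl_group S \<Longrightarrow> linear w"
proof (induction rule: refl_group.induct)
  case id_in
  show ?case by (rule linear_id)
next
  case (step \<alpha> w)
  show ?case by (rule linear_compose[OF step.IH linear_refl])
qed

lemma refl_group_fixes_orthogonal: "w \<in> refl_group S \<Longrightarrow> (\<forall>\<alpha>\<in>S. x \<bullet> \<alpha> = 0) \<Longrightarrow> w x = x"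
  by (induction rule: refl_group.induct) (auto simp: refl_orthogonal)

lemma bij_refl: "\<alpha> \<noteq> 0 \<Longrightarrow> bij (refl \<alpha>)"
  by (rule involuntory_imp_bij) (rule refl_refl)

lemma bij_refl_group: "w \<in> refl_group S \<Longrightarrow> 0 \<notin> S \<Longrightarrow> bij w"
  by (induction rule: refl_group.induct) (auto intro: bij_comp bij_refl)

lemma refl_group_maps_roots:
  assumes "root_system \<Phi>" "S \<subseteq> \<Phi>" "w \<in> refl_group S"
  shows "w ` \<Phi> \<subseteq> \<Phi>"
  using assms(3,2)
proof (induction rule: refl_group.induct)
  case (step \<alpha> w)
  then have "refl \<alpha> ` \<Phi> = \<Phi>"
    using assms(1) unfolding root_system_def by blast
  with step show ?case by (auto simp: image_comp[symmetric])
qed simp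

lemma refl_group_eqI:
  assumes "w1 \<in> refl_group S" "w2 \<in> refl_group S" "\<And>\<alpha>. \<alpha> \<in> S \<Longrightarrow> w1 \<alpha> = w2 \<alpha>"
  shows "w1 = w2"
proof
  fix x
  obtain y z where y: "y \<in> span S" and z: "\<And>s. s \<in> span S \<Longrightarrow> orthogonal z s" and "x = y + z"
    using orthogonal_subspace_decomp_exists by blast
  have lin: "linear w1" "linear w2"
    using assms(1,2) by (auto intro: linear_refl_group)
  have "w1 y = w2 y"
    using linear_eq_on_span[OF lin] assms(3) y by blast
  moreover have "\<forall>\<alpha>\<in>S. z \<bullet> \<alpha> = 0"
    using z span_base unfolding orthogonal_def by blast
  then have "w1 z = w2 z"
    using assms(1,2) refl_group_fixes_orthogonal by metis
  ultimately show "w1 x = w2 x"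
    using \<open>x = y + z\<close> lin by (simp add: linear_add)
qed

lemma finite_refl_group:
  assumes "root_system \<Phi>" "S \<subseteq> \<Phi>"
  shows "finite (refl_group S)"
proof -
  have "inj_on (\<lambda>w. restrict w \<Phi>) (refl_group S)"
    by (rule inj_onI) (metis assms(2) refl_group_eqI restrict_apply' subsetD)
  moreover have "(\<lambda>w. restrict w \<Phi>) ` refl_group S \<subseteq> (\<Pi>\<^sub>E \<beta>\<in>\<Phi>. \<Phi>)"
    using refl_group_maps_roots[OF assms] by fastforce
  moreover have "finite (\<Pi>\<^sub>E \<beta>\<in>\<Phi>. \<Phi>)"
    using assms(1) unfolding root_system_def by (simp add: finite_PiE)
  ultimately show ?thesis
    by (meson finite_imageD finite_subset)
qed

lemma CV_sum: "(\<And>i. i \<in> I \<Longrightarrow> f i \<in> CV V) \<Longrightarrow> (\<lambda>u. \<Sum>i\<in>I. f i u) \<in> CV V"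
  unfolding CV_def by auto

lemma CV_indicator: "v \<in> V \<Longrightarrow> indicator {v} \<in> CV V"
  unfolding CV_def indicator_def by auto

lemma CV_expansion:
  assumes "finite V" "x \<in> CV V"
  shows "x = (\<lambda>u. \<Sum>v\<in>V. x v * indicator {v} u)"
proof
  fix u
  show "x u = (\<Sum>v\<in>V. x v * indicator {v} u)"
    using assms unfolding CV_def by (cases "u \<in> V") (auto simp: indicator_def if_distrib cong: if_cong)
qed

locale finite_linear_action =
  fixes G :: "('a \<Rightarrow> 'a) set" and V :: "'v set"
    and \<rho> :: "('a \<Rightarrow> 'a) \<Rightarrow> ('v \<Rightarrow> complex) \<Rightarrow> ('v \<Rightarrow> complex)"
  assumes finite_G: "finite G"
    and id_mem: "id \<in> G"
    and comp_mem: "g \<in> G \<Longrightarrow> h \<in> G \<Longrightarrow> g \<circ> h \<in> G"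
    and bij_mem: "g \<in> G \<Longrightarrow> bij g"
    and CV_closed: "g \<in> G \<Longrightarrow> x \<in> CV V \<Longrightarrow> \<rho> g x \<in> CV V"
    and additive: "g \<in> G \<Longrightarrow> x \<in> CV V \<Longrightarrow> y \<in> CV V \<Longrightarrow> \<rho> g (\<lambda>u. x u + y u) = (\<lambda>u. \<rho> g x u + \<rho> g y u)"
    and homogeneous: "g \<in> G \<Longrightarrow> x \<in> CV V \<Longrightarrow> \<rho> g (\<lambda>u. c * x u) = (\<lambda>u. c * \<rho> g x u)"
    and compose: "g \<in> G \<Longrightarrow> h \<in> G \<Longrightarrow> x \<in> CV V \<Longrightarrow> \<rho> (g \<circ> h) x = \<rho> g (\<rho> h x)"
begin

lemma card_G_nonzero: "card G \<noteq> 0"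
  using finite_G id_mem by auto

lemma sum_comp_left:
  assumes "h \<in> G"
  shows "(\<Sum>g\<in>G. f (h \<circ> g)) = (\<Sum>g\<in>G. f g)"
proof (rule sum.reindex_bij_betw)
  have "inj_on ((\<circ>) h) G"
    by (rule inj_onI) (simp add: fun_eq_iff bij_is_inj bij_mem[OF assms] inj_eq)
  moreover have "(\<circ>) h ` G = G"
    by (rule endo_inj_surj[OF finite_G _ calculation]) (auto intro: comp_mem[OF assms])
  ultimately show "bij_betw ((\<circ>) h) G G"
    by (simp add: bij_betw_def)
qed

lemma sum_comp_right:
  assumes "h \<in> G"
  shows "(\<Sum>g\<in>G. f (g \<circ> h)) = (\<Sum>g\<in>G. f g)"
proof (rule sum.reindex_bij_betw)
  have "inj_on (\<lambda>g. g \<circ> h) G"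
    by (rule inj_onI, rule surj_fun_eq[of h UNIV]) (simp_all add: bij_is_surj bij_mem[OF assms] fun_eq_iff)
  moreover have "(\<lambda>g. g \<circ> h) ` G = G"
    by (rule endo_inj_surj[OF finite_G _ calculation]) (auto intro: comp_mem[OF _ assms])
  ultimately show "bij_betw (\<lambda>g. g \<circ> h) G G"
    by (simp add: bij_betw_def)
qed

lemma linear_combination:
  assumes "g \<in> G" "finite I" "\<And>i. i \<in> I \<Longrightarrow> f i \<in> CV V"
  shows "\<rho> g (\<lambda>u. \<Sum>i\<in>I. c i * f i u) = (\<lambda>u. \<Sum>i\<in>I. c i * \<rho> g (f i) u)"
  using assms(2,3)
proof (induction I rule: finite_induct)
  case empty
  have "(\<lambda>u. 0) \<in> CV V"
    unfolding CV_def by simp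
  from homogeneous[OF assms(1) this, of 0] show ?case
    by simp
next
  case (insert j I)
  have "\<rho> g (\<lambda>u. \<Sum>i\<in>insert j I. c i * f i u) = \<rho> g (\<lambda>u. c j * f j u + (\<Sum>i\<in>I. c i * f i u))"
    using insert.hyps by simp
  also have "\<dots> = (\<lambda>u. \<rho> g (\<lambda>u. c j * f j u) u + \<rho> g (\<lambda>u. \<Sum>i\<in>I. c i * f i u) u)"
    by (rule additive) (use assms(1) insert.prems in \<open>auto simp: CV_def\<close>)
  also have "\<dots> = (\<lambda>u. \<Sum>i\<in>insert j I. c i * \<rho> g (f i) u)"
    using insert homogeneous[OF assms(1)] by simp
  finally show ?case .
qed

definition average :: "('v \<Rightarrow> complex) \<Rightarrow> 'v \<Rightarrow> complex" where
  "average x = (\<lambda>u. \<Sum>g\<in>G. \<rho> g x u)"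

lemma average_CV: "x \<in> CV V \<Longrightarrow> average x \<in> CV V"
  unfolding average_def by (intro CV_sum CV_closed)

lemma average_invariant:
  assumes "h \<in> G" "x \<in> CV V"
  shows "\<rho> h (average x) = average x"
proof -
  have "\<rho> h (average x) = (\<lambda>u. \<Sum>g\<in>G. \<rho> h (\<rho> g x) u)"
    using linear_combination[OF assms(1) finite_G, of "\<lambda>g. \<rho> g x" "\<lambda>_. 1"] assms CV_closed
    by (simp add: average_def)
  also have "\<dots> = (\<lambda>u. \<Sum>g\<in>G. \<rho> (h \<circ> g) x u)"
    using assms by (simp add: compose)
  also have "\<dots> = average x"
    unfolding average_def by (rule ext) (rule sum_comp_left[OF assms(1)])
  finally show ?thesis .
qed

lemma average_of_invariant:
  assumes "\<And>g. g \<in> G \<Longrightarrow> \<rho> g x = x"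
  shows "average x = (\<lambda>u. of_nat (card G) * x u)"
  using assms by (simp add: average_def)

lemma average_eq_0_if_negated:
  assumes "h \<in> G" "x \<in> CV V" "\<rho> h x = (\<lambda>u. - x u)"
  shows "average x = (\<lambda>u. 0)"
proof -
  have neg: "\<rho> g (\<lambda>u. - x u) = (\<lambda>u. - \<rho> g x u)" if "g \<in> G" for g
    using homogeneous[OF that assms(2), of "-1"] by simp
  have "average x = (\<lambda>u. \<Sum>g\<in>G. \<rho> (g \<circ> h) x u)"
    unfolding average_def by (rule ext) (rule sum_comp_right[OF assms(1), symmetric])
  also have "\<dots> = (\<lambda>u. \<Sum>g\<in>G. - \<rho> g x u)"
    using assms by (simp add: compose neg)
  also have "\<dots> = (\<lambda>u. - average x u)"
    by (simp add: average_def sum_negf)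
  finally show ?thesis
    by (simp add: fun_eq_iff)
qed

lemma invariant_imp_average_indicator_nonzero:
  assumes "finite V" "x \<in> CV V" "x u \<noteq> 0" "\<And>g. g \<in> G \<Longrightarrow> \<rho> g x = x"
  shows "\<exists>v\<in>V. average (indicator {v}) \<noteq> (\<lambda>u. 0)"
proof (rule ccontr)
  assume "\<not> ?thesis"
  then have zero: "\<And>v. v \<in> V \<Longrightarrow> average (indicator {v}) = (\<lambda>u. 0)"
    by blast
  have "\<rho> g x = (\<lambda>u. \<Sum>v\<in>V. x v * \<rho> g (indicator {v}) u)" if "g \<in> G" for g
  proof -
    have "\<rho> g x = \<rho> g (\<lambda>u. \<Sum>v\<in>V. x v * indicator {v} u)"
      by (rule arg_cong[where f = "\<rho> g"]) (rule CV_expansion[OF assms(1,2)])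
    also have "\<dots> = (\<lambda>u. \<Sum>v\<in>V. x v * \<rho> g (indicator {v}) u)"
      using linear_combination[OF that assms(1) CV_indicator] .
    finally show ?thesis .
  qed
  then have "average x = (\<lambda>u. \<Sum>g\<in>G. \<Sum>v\<in>V. x v * \<rho> g (indicator {v}) u)"
    by (simp add: average_def)
  also have "\<dots> = (\<lambda>u. \<Sum>v\<in>V. x v * average (indicator {v}) u)"
    by (simp add: average_def sum.swap[of _ G] sum_distrib_left)
  also have "\<dots> = (\<lambda>u. 0)"
    using zero by simp
  finally have "average x u = 0"
    by simp
  then show False
    using average_of_invariant[OF assms(4)] card_G_nonzero assms(3) by simp
qed

end

lemma wg_op_indicator_negated:
  assumes "finite V" "v \<in> V" "\<alpha> \<in> \<tau> v"
  shows "wg_op V m \<tau> \<alpha> (indicator {v}) = (\<lambda>u. - indicator {v} u)"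
proof
  fix u
  have "(\<Sum>v'\<in>V. wg_coeff m \<tau> \<alpha> u v' * indicator {v} v') = wg_coeff m \<tau> \<alpha> u v"
    using assms(1,2) by (simp add: indicator_def if_distrib cong: if_cong)
  then show "wg_op V m \<tau> \<alpha> (indicator {v}) u = - indicator {v} u"
    using assms(2,3) by (auto simp: wg_op_def wg_coeff_def indicator_def)
qed

lemma wg_op_coordinate:
  assumes "finite V" "v \<in> V" "\<alpha> \<notin> \<tau> v"
  shows "wg_op V m \<tau> \<alpha> x v = x v"
proof -
  have "wg_coeff m \<tau> \<alpha> v v' * x v' = (if v' = v then x v else 0)" for v'
    using assms(3) by (auto simp: wg_coeff_def)
  then show ?thesis
    using assms(1,2) by (simp add: wg_op_def)
qed

lemma
  assumes "W_graph_rep \<Phi> \<Delta> V m \<tau> \<rho>"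
  shows W_graph_rep_CV: "w \<in> weyl_group \<Phi> \<Longrightarrow> x \<in> CV V \<Longrightarrow> \<rho> w x \<in> CV V"
    and W_graph_rep_add: "w \<in> weyl_group \<Phi> \<Longrightarrow> x \<in> CV V \<Longrightarrow> y \<in> CV V
      \<Longrightarrow> \<rho> w (\<lambda>u. x u + y u) = (\<lambda>u. \<rho> w x u + \<rho> w y u)"
    and W_graph_rep_scale: "w \<in> weyl_group \<Phi> \<Longrightarrow> x \<in> CV V \<Longrightarrow> \<rho> w (\<lambda>u. c * x u) = (\<lambda>u. c * \<rho> w x u)"
    and W_graph_rep_id: "x \<in> CV V \<Longrightarrow> \<rho> id x = x"
    and W_graph_rep_comp: "w1 \<in> weyl_group \<Phi> \<Longrightarrow> w2 \<in> weyl_group \<Phi> \<Longrightarrow> x \<in> CV V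
      \<Longrightarrow> \<rho> (w1 \<circ> w2) x = \<rho> w1 (\<rho> w2 x)"
    and W_graph_rep_simple_refl: "\<alpha> \<in> \<Delta> \<Longrightarrow> x \<in> CV V \<Longrightarrow> \<rho> (refl \<alpha>) x = wg_op V m \<tau> \<alpha> x"
  using assms unfolding W_graph_rep_def by blast+

lemma simple_refl_negates_indicator:
  assumes rep: "W_graph_rep \<Phi> \<Delta> V m \<tau> \<rho>" and "finite V" "v \<in> V" "\<alpha> \<in> \<Delta>" "\<alpha> \<in> \<tau> v"
  shows "\<rho> (refl \<alpha>) (indicator {v}) = (\<lambda>u. - indicator {v} u)"
  using W_graph_rep_simple_refl[OF rep \<open>\<alpha> \<in> \<Delta>\<close> CV_indicator[OF \<open>v \<in> V\<close>]]
    wg_op_indicator_negated[where \<tau> = \<tau>, OF \<open>finite V\<close> \<open>v \<in> V\<close> \<open>\<alpha> \<in> \<tau> v\<close>] by simp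

lemma simple_refl_fixes_coordinate:
  assumes rep: "W_graph_rep \<Phi> \<Delta> V m \<tau> \<rho>" and "finite V" "v \<in> V" "\<alpha> \<in> \<Delta>" "\<alpha> \<notin> \<tau> v" "x \<in> CV V"
  shows "\<rho> (refl \<alpha>) x v = x v"
  using W_graph_rep_simple_refl[OF rep \<open>\<alpha> \<in> \<Delta>\<close> \<open>x \<in> CV V\<close>]
    wg_op_coordinate[where \<tau> = \<tau>, OF \<open>finite V\<close> \<open>v \<in> V\<close> \<open>\<alpha> \<notin> \<tau> v\<close>] by simp

lemma W_graph_rep_parabolic_action:
  assumes "root_system \<Phi>" "A \<subseteq> \<Phi>" and rep: "W_graph_rep \<Phi> \<Delta> V m \<tau> \<rho>"
  shows "finite_linear_action (parabolic A) V \<rho>"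
proof
  have "0 \<notin> A"
    using assms(1,2) unfolding root_system_def by blast
  then show "bij g" if "g \<in> parabolic A" for g
    using bij_refl_group[OF that] by blast
  have W: "w \<in> weyl_group \<Phi>" if "w \<in> parabolic A" for w
    using refl_group_mono[OF that assms(2)] .
  show "finite (parabolic A)"
    using finite_refl_group[OF assms(1,2)] .
  show "id \<in> parabolic A"
    by (rule refl_group.id_in)
  show "g \<circ> h \<in> parabolic A" if "g \<in> parabolic A" "h \<in> parabolic A" for g h
    using refl_group_comp_closed[OF that] .
  show "\<rho> g x \<in> CV V" if "g \<in> parabolic A" "x \<in> CV V" for g x
    using W_graph_rep_CV[OF rep W[OF that(1)] that(2)] .
  show "\<rho> g (\<lambda>u. x u + y u) = (\<lambda>u. \<rho> g x u + \<rho> g y u)"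
    if "g \<in> parabolic A" "x \<in> CV V" "y \<in> CV V" for g x y
    using W_graph_rep_add[OF rep W[OF that(1)] that(2,3)] .
  show "\<rho> g (\<lambda>u. c * x u) = (\<lambda>u. c * \<rho> g x u)" if "g \<in> parabolic A" "x \<in> CV V" for g x c
    using W_graph_rep_scale[OF rep W[OF that(1)] that(2)] .
  show "\<rho> (g \<circ> h) x = \<rho> g (\<rho> h x)" if "g \<in> parabolic A" "h \<in> parabolic A" "x \<in> CV V" for g h x
    using W_graph_rep_comp[OF rep W[OF that(1)] W[OF that(2)] that(3)] .
qed

lemma parabolic_fixes_coordinate:
  assumes rep: "W_graph_rep \<Phi> \<Delta> V m \<tau> \<rho>" and "A \<subseteq> \<Delta>" "\<Delta> \<subseteq> \<Phi>" "finite V"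
    and v: "v \<in> V" "A \<inter> \<tau> v = {}"
    and "w \<in> parabolic A" "x \<in> CV V"
  shows "\<rho> w x v = x v"
  using \<open>w \<in> parabolic A\<close> \<open>x \<in> CV V\<close>
proof (induction arbitrary: x rule: refl_group.induct)
  case id_in
  then show ?case
    using W_graph_rep_id[OF rep id_in] by (simp add: id_def)
next
  case (step \<alpha> w)
  have "A \<subseteq> \<Phi>"
    using assms(2,3) by blast
  then have W: "w \<in> weyl_group \<Phi>" "refl \<alpha> \<in> weyl_group \<Phi>"
    using refl_group_mono refl_mem_refl_group step.hyps by blast+
  have "\<alpha> \<in> \<Delta>" "\<alpha> \<notin> \<tau> v"
    using step.hyps(1) assms(2) v(2) by blast+
  have "\<rho> (refl \<alpha> \<circ> w) x v = \<rho> (refl \<alpha>) (\<rho> w x) v"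
    using W_graph_rep_comp[OF rep W(2,1) step.prems] by simp
  also have "\<dots> = \<rho> w x v"
    using simple_refl_fixes_coordinate[OF rep \<open>finite V\<close> v(1) \<open>\<alpha> \<in> \<Delta>\<close> \<open>\<alpha> \<notin> \<tau> v\<close>]
      W_graph_rep_CV[OF rep W(1) step.prems] by blast
  also have "\<dots> = x v"
    using step.IH[OF step.prems] .
  finally show ?case .
qed

theorem corollary2p7:
  fixes \<Phi> \<Delta> A :: "'a::euclidean_space set"
    and V :: "'v set" and m :: "'v \<Rightarrow> 'v \<Rightarrow> complex" and \<tau> :: "'v \<Rightarrow> 'a set"
    and \<rho> :: "('a \<Rightarrow> 'a) \<Rightarrow> ('v \<Rightarrow> complex) \<Rightarrow> ('v \<Rightarrow> complex)"
  assumes "root_system \<Phi>" and "simple_system \<Phi> \<Delta>"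
    and "weak_W_graph \<Phi> \<Delta> V m \<tau>"
    and "W_graph_rep \<Phi> \<Delta> V m \<tau> \<rho>"
    and "A \<subseteq> \<Delta>"
  shows "(\<exists>x\<in>CV V. (\<exists>u. x u \<noteq> 0) \<and> (\<forall>w\<in>parabolic A. \<rho> w x = x))
         \<longleftrightarrow> (\<exists>v\<in>V. A \<inter> \<tau> v = {})"
proof -
  have "\<Delta> \<subseteq> \<Phi>" "finite V"
    using assms(2,3) unfolding simple_system_def weak_W_graph_def by blast+
  interpret finite_linear_action "parabolic A" V \<rho>
    using W_graph_rep_parabolic_action[OF assms(1) _ assms(4)] assms(5) \<open>\<Delta> \<subseteq> \<Phi>\<close> by blast
  show ?thesis
  proof
    assume "\<exists>x\<in>CV V. (\<exists>u. x u \<noteq> 0) \<and> (\<forall>w\<in>parabolic A. \<rho> w x = x)"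
    then obtain v where v: "v \<in> V" "average (indicator {v}) \<noteq> (\<lambda>u. 0)"
      using invariant_imp_average_indicator_nonzero[OF \<open>finite V\<close>] by blast
    have "\<alpha> \<notin> \<tau> v" if "\<alpha> \<in> A" for \<alpha>
      using simple_refl_negates_indicator[OF assms(4) \<open>finite V\<close> v(1) subsetD[OF assms(5) that]]
        average_eq_0_if_negated[OF refl_mem_refl_group[OF that] CV_indicator[OF v(1)]] v(2) by blast
    then show "\<exists>v\<in>V. A \<inter> \<tau> v = {}"
      using v(1) by blast
  next
    assume "\<exists>v\<in>V. A \<inter> \<tau> v = {}"
    then obtain v where v: "v \<in> V" "A \<inter> \<tau> v = {}"
      by blast
    have "average (indicator {v}) v \<noteq> 0"
      using parabolic_fixes_coordinate[OF assms(4,5) \<open>\<Delta> \<subseteq> \<Phi>\<close> \<open>finite V\<close> v _ CV_indicator[OF v(1)]]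
        card_G_nonzero by (simp add: average_def)
    then show "\<exists>x\<in>CV V. (\<exists>u. x u \<noteq> 0) \<and> (\<forall>w\<in>parabolic A. \<rho> w x = x)"
      using average_CV[OF CV_indicator[OF v(1)]] average_invariant[OF _ CV_indicator[OF v(1)]] by blast
  qed
qed

end
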